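(* With the setting in the context, for all $s\in\mathrm{hom}(C,G)_{-1}$ and $v\in\mathrm{hom}(C,G)^1$, $$\mathcal A_s=\prod_n\prod_{x\in K_n}A_x^{s_n(x)},\qquad \mathcal B_v=\prod_n\prod_{x\in K_n}B_x^{v_n(x)},$$ where $s_n(x)\in\widehat G_{n+1}$ is defined by $s_n(x)(g)=s(gx^* )$ for $g\in G_{n+1}$, and $v_n(x)\in G_{n-1}$ is the value of the $n$-th component of $v$ at $x$.
   Context: $(C_\bullet,\partial^C_\bullet)$ is a chain complex with each $C_n$ free abelian on a finite set $K_n$, $K_n\ne\emptyset$ for finitely many $n$; $(G_\bullet,\partial^G_\bullet)$ is a chain complex of finite abelian groups, $\widehat{G}_k=\mathrm{Hom}(G_k,U(1))$. $\mathrm{hom}(C,G)^p=\prod_n\mathrm{Hom}(C_n,G_{n-p})$ with $(\delta^pf)_n=f_{n-1}\partial^C_n-(-1)^p\partial^G_{n-p}f_n$. $\mathrm{hom}(C,G)_p=\mathrm{Hom}(\mathrm{hom}(C,G)^p,U(1))$ (written additively), $\chi_m(f)=m(f)$, $\delta_1m=m\circ\delta^0$. $\mathcal H=\bigotimes_n\bigotimes_{x\in K_n}\mathbb C[G_n]$ with orthonormal basis $|f\rangle$, $f\in\mathrm{hom}(C,G)^0$; $P_t|f\rangle=|f+t\rangle$, $Q_m|f\rangle=\chi_m(f)|f\rangle$; $A_t=P_{\delta^{-1}t}$, $B_m=Q_{\delta_1m}$. $\mathcal A_s=\frac1{|\mathrm{hom}(C,G)^{-1}|}\sum_{t\in\mathrm{hom}(C,G)^{-1}}\chi_s(t)A_t$,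 $\mathcal B_v=\frac1{|\mathrm{hom}(C,G)_1|}\sum_{m\in\mathrm{hom}(C,G)_1}\chi_m(v)B_m$. For $x\in K_n$, $g\in G_{n-p}$, $gx^*\in\mathrm{hom}(C,G)^p$ has $n$-th component sending $x\mapsto g$ and other elements of $K_n$ to $0$, other components $0$; for $r\in\widehat G_{n-p}$, $rx_*(f)=r(f_n(x))$. For $x\in K_n$: $A_x^r=\frac1{|G_{n+1}|}\sum_{h\in G_{n+1}}r(h)A_{hx^*}$ ($r\in\widehat G_{n+1}$), $B_x^g=\frac1{|G_{n-1}|}\sum_{r\in\widehat G_{n-1}}r(g)B_{rx_*}$ ($g\in G_{n-1}$). *)

theory Defs
  imports Complex_Main "HOL-Algebra.Algebra"
begin

(* C_n is free abelian on K n; the boundary of C is given by its integer matrix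
   dC n x y = coefficient of y in the boundary of x (x in K n, y in K (n-1)).
   A homomorphism C_n -> G_k is identified with its restriction to the basis K n.
   Elements of hom(C,G)^p are families f with f n y in carrier (G (n-p)) for
   y in K n, and f n y = undefined otherwise (extensional).
   U(1)-valued characters are complex-valued functions of modulus 1. *)

type_synonym ('c,'g) fam = "int \<Rightarrow> 'c \<Rightarrow> 'g"

definition homsup :: "(int \<Rightarrow> 'c set) \<Rightarrow> (int \<Rightarrow> 'g monoid) \<Rightarrow> int \<Rightarrow> ('c,'g) fam set" where
  "homsup K G p = {f. \<forall>n y. (y \<in> K n \<longrightarrow> f n y \<in> carrier (G (n - p))) \<and>
                              (y \<notin> K n \<longrightarrow> f n y = undefined)}"

definition fam_add :: "(int \<Rightarrow> 'c set) \<Rightarrow> (int \<Rightarrow> 'g monoid) \<Rightarrow> int \<Rightarrow> ('c,'g) fam \<Rightarrow> ('c,'g) fam \<Rightarrow> ('c,'g) fam" where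
  "fam_add K G p f g = (\<lambda>n y. if y \<in> K n then f n y \<otimes>\<^bsub>G (n - p)\<^esub> g n y else undefined)"

definition homsub :: "(int \<Rightarrow> 'c set) \<Rightarrow> (int \<Rightarrow> 'g monoid) \<Rightarrow> int \<Rightarrow> (('c,'g) fam \<Rightarrow> complex) set" where
  "homsub K G p = {m. m \<in> extensional (homsup K G p) \<and>
      (\<forall>f \<in> homsup K G p. cmod (m f) = 1) \<and>
      (\<forall>f \<in> homsup K G p. \<forall>g \<in> homsup K G p. m (fam_add K G p f g) = m f * m g)}"

definition gchars :: "'g monoid \<Rightarrow> ('g \<Rightarrow> complex) set" where
  "gchars H = {r. r \<in> extensional (carrier H) \<and> (\<forall>a \<in> carrier H. cmod (r a) = 1) \<and>
      (\<forall>a \<in> carrier H. \<forall>b \<in> carrier H. r (a \<otimes>\<^bsub>H\<^esub> b) = r a * r b)}"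

text \<open>The coboundary delta^p : hom(C,G)^p -> hom(C,G)^(p+1),
  (delta^p f)_n = f_(n-1) o dC_n - (-1)^p dG_(n-p) o f_n.\<close>
definition cobdry :: "(int \<Rightarrow> 'c set) \<Rightarrow> (int \<Rightarrow> 'c \<Rightarrow> 'c \<Rightarrow> int) \<Rightarrow> (int \<Rightarrow> 'g monoid) \<Rightarrow>
    (int \<Rightarrow> 'g \<Rightarrow> 'g) \<Rightarrow> int \<Rightarrow> ('c,'g) fam \<Rightarrow> ('c,'g) fam" where
  "cobdry K dC G dG p f = (\<lambda>n y. if y \<in> K n then
      (finprod (G (n - (p + 1))) (\<lambda>z. f (n - 1) z [^]\<^bsub>G (n - (p + 1))\<^esub> dC n y z) (K (n - 1)))
      \<otimes>\<^bsub>G (n - (p + 1))\<^esub>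
      (if even p then inv\<^bsub>G (n - (p + 1))\<^esub> (dG (n - p) (f n y)) else dG (n - p) (f n y))
    else undefined)"

text \<open>Operators on H are represented by their matrices w.r.t. the basis |f>, f in hom(C,G)^0:
  M a b = <a| M |b>.\<close>
type_synonym ('c,'g) op = "('c,'g) fam \<Rightarrow> ('c,'g) fam \<Rightarrow> complex"

definition mat_mult :: "('c,'g) fam set \<Rightarrow> ('c,'g) op \<Rightarrow> ('c,'g) op \<Rightarrow> ('c,'g) op" where
  "mat_mult B M N = (\<lambda>a b. \<Sum>c\<in>B. M a c * N c b)"

definition mat_one :: "('c,'g) op" where
  "mat_one = (\<lambda>a b. if a = b then 1 else 0)"

definition mat_prod_list :: "('c,'g) fam set \<Rightarrow> ('c,'g) op list \<Rightarrow> ('c,'g) op" where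
  "mat_prod_list B Ms = foldr (mat_mult B) Ms mat_one"

text \<open>P_t |f> = |f + t>,  Q_m |f> = chi_m(f) |f>.\<close>
definition opP :: "(int \<Rightarrow> 'c set) \<Rightarrow> (int \<Rightarrow> 'g monoid) \<Rightarrow> ('c,'g) fam \<Rightarrow> ('c,'g) op" where
  "opP K G t = (\<lambda>a b. if a = fam_add K G 0 b t then 1 else 0)"

definition opQ :: "(('c,'g) fam \<Rightarrow> complex) \<Rightarrow> ('c,'g) op" where
  "opQ m = (\<lambda>a b. if a = b then m b else 0)"

definition opA :: "(int \<Rightarrow> 'c set) \<Rightarrow> (int \<Rightarrow> 'c \<Rightarrow> 'c \<Rightarrow> int) \<Rightarrow> (int \<Rightarrow> 'g monoid) \<Rightarrow>
    (int \<Rightarrow> 'g \<Rightarrow> 'g) \<Rightarrow> ('c,'g) fam \<Rightarrow> ('c,'g) op" where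
  "opA K dC G dG t = opP K G (cobdry K dC G dG (-1) t)"

definition opB :: "(int \<Rightarrow> 'c set) \<Rightarrow> (int \<Rightarrow> 'c \<Rightarrow> 'c \<Rightarrow> int) \<Rightarrow> (int \<Rightarrow> 'g monoid) \<Rightarrow>
    (int \<Rightarrow> 'g \<Rightarrow> 'g) \<Rightarrow> (('c,'g) fam \<Rightarrow> complex) \<Rightarrow> ('c,'g) op" where
  "opB K dC G dG m = opQ (\<lambda>f. m (cobdry K dC G dG 0 f))"

definition bigA :: "(int \<Rightarrow> 'c set) \<Rightarrow> (int \<Rightarrow> 'c \<Rightarrow> 'c \<Rightarrow> int) \<Rightarrow> (int \<Rightarrow> 'g monoid) \<Rightarrow>
    (int \<Rightarrow> 'g \<Rightarrow> 'g) \<Rightarrow> (('c,'g) fam \<Rightarrow> complex) \<Rightarrow> ('c,'g) op" where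
  "bigA K dC G dG s = (\<lambda>a b. (1 / of_nat (card (homsup K G (-1)))) *
      (\<Sum>t \<in> homsup K G (-1). s t * opA K dC G dG t a b))"

definition bigB :: "(int \<Rightarrow> 'c set) \<Rightarrow> (int \<Rightarrow> 'c \<Rightarrow> 'c \<Rightarrow> int) \<Rightarrow> (int \<Rightarrow> 'g monoid) \<Rightarrow>
    (int \<Rightarrow> 'g \<Rightarrow> 'g) \<Rightarrow> ('c,'g) fam \<Rightarrow> ('c,'g) op" where
  "bigB K dC G dG v = (\<lambda>a b. (1 / of_nat (card (homsub K G 1))) *
      (\<Sum>m \<in> homsub K G 1. m v * opB K dC G dG m a b))"

definition costar :: "(int \<Rightarrow> 'c set) \<Rightarrow> (int \<Rightarrow> 'g monoid) \<Rightarrow> int \<Rightarrow> int \<Rightarrow> 'c \<Rightarrow> 'g \<Rightarrow> ('c,'g) fam" where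
  "costar K G p n x g = (\<lambda>k y. if y \<in> K k then (if k = n \<and> y = x then g else \<one>\<^bsub>G (k - p)\<^esub>)
                              else undefined)"

definition pushch :: "(int \<Rightarrow> 'c set) \<Rightarrow> (int \<Rightarrow> 'g monoid) \<Rightarrow> int \<Rightarrow> int \<Rightarrow> 'c \<Rightarrow> ('g \<Rightarrow> complex) \<Rightarrow>
    (('c,'g) fam \<Rightarrow> complex)" where
  "pushch K G p n x r = (\<lambda>f. if f \<in> homsup K G p then r (f n x) else undefined)"

definition locA :: "(int \<Rightarrow> 'c set) \<Rightarrow> (int \<Rightarrow> 'c \<Rightarrow> 'c \<Rightarrow> int) \<Rightarrow> (int \<Rightarrow> 'g monoid) \<Rightarrow>
    (int \<Rightarrow> 'g \<Rightarrow> 'g) \<Rightarrow> int \<Rightarrow> 'c \<Rightarrow> ('g \<Rightarrow> complex) \<Rightarrow> ('c,'g) op" where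
  "locA K dC G dG n x r = (\<lambda>a b. (1 / of_nat (card (carrier (G (n + 1))))) *
      (\<Sum>h \<in> carrier (G (n + 1)). r h * opA K dC G dG (costar K G (-1) n x h) a b))"

definition locB :: "(int \<Rightarrow> 'c set) \<Rightarrow> (int \<Rightarrow> 'c \<Rightarrow> 'c \<Rightarrow> int) \<Rightarrow> (int \<Rightarrow> 'g monoid) \<Rightarrow>
    (int \<Rightarrow> 'g \<Rightarrow> 'g) \<Rightarrow> int \<Rightarrow> 'c \<Rightarrow> 'g \<Rightarrow> ('c,'g) op" where
  "locB K dC G dG n x g = (\<lambda>a b. (1 / of_nat (card (carrier (G (n - 1))))) *
      (\<Sum>r \<in> gchars (G (n - 1)). r g * opB K dC G dG (pushch K G 1 n x r) a b))"

definition s_comp :: "(int \<Rightarrow> 'c set) \<Rightarrow> (int \<Rightarrow> 'g monoid) \<Rightarrow> (('c,'g) fam \<Rightarrow> complex) \<Rightarrow>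
    int \<Rightarrow> 'c \<Rightarrow> ('g \<Rightarrow> complex)" where
  "s_comp K G s n x = (\<lambda>g. if g \<in> carrier (G (n + 1)) then s (costar K G (-1) n x g) else undefined)"

end

theory Submission
  imports Defs
begin

(* Both sides of each identity are averages of translation operators (for A) or of diagonal
   operators (for B).  For A, the coboundary is additive and s is a character, so
   P(delta t1) P(delta t2) = P(delta (t1 + t2)) and s(t1 + t2) = s t1 * s t2; hence multiplying the
   local averages over G_(n+1) attached to the cells one after the other gives the average over the
   families supported on the cells used so far, which at the end is all of hom(C,G)^(-1).
   For B everything is diagonal, and by orthogonality of characters the diagonal entry at b of the
   global average is the indicator of v + delta b = 0, while the local factor at a cell x is the
   indicator of the same equation evaluated at x.  Orthogonality rests on the dual of a finite
   abelian group separating points and having the size of the group; separation is proved by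
   extending characters from a subgroup one element at a time. *)

section \<open>Characters of finite abelian groups\<close>

lemma sum_eq_0_if_scaled_by_injection:
  fixes g :: "'a \<Rightarrow> 'b::field"
  assumes A: "finite A" and f: "inj_on f A" "f ` A \<subseteq> A"
    and scaled: "\<And>x. x \<in> A \<Longrightarrow> g (f x) = c * g x" and c: "c \<noteq> 1"
  shows "sum g A = 0"
proof -
  have "sum g A = sum g (f ` A)" using endo_inj_surj[OF A f(2,1)] by simp
  also have "\<dots> = c * sum g A" using f(1) scaled by (simp add: sum.reindex sum_distrib_left)
  finally have "(1 - c) * sum g A = 0" by (simp add: algebra_simps)
  then show ?thesis using c by simp
qed

lemma unit_complex_root:
  assumes "cmod c = 1" "0 < k"
  shows "\<exists>z. z ^ k = c \<and> cmod z = 1"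
proof -
  have "c \<noteq> 0" using assms(1) by auto
  then have "cis (Arg c / real k) ^ k = c"
    using assms by (simp add: DeMoivre cis_Arg sgn_div_norm)
  then show ?thesis by (intro exI[of _ "cis (Arg c / real k)"]) simp
qed

lemma (in group) finite_subgroupI:
  assumes "finite (carrier G)" "H \<subseteq> carrier G" "\<one> \<in> H" "\<And>a b. a \<in> H \<Longrightarrow> b \<in> H \<Longrightarrow> a \<otimes> b \<in> H"
  shows "subgroup H G"
proof (rule subgroupI)
  have pow: "a [^] (n::nat) \<in> H" if "a \<in> H" for a n
    using that by (induction n) (auto intro: assms(3,4))
  fix a assume a: "a \<in> H"
  then have ac: "a \<in> carrier G" using assms(2) by blast
  have "a [^] (ord a - 1) \<otimes> a = \<one>"
    using ord_ge_1[OF assms(1) ac] ac by (simp flip: nat_pow_Suc)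
  then have "inv a = a [^] (ord a - 1)" using ac by (simp add: inv_equality)
  then show "inv a \<in> H" using pow[OF a] by simp
qed (use assms in blast)+

context comm_group
begin

definition char_on :: "'a set \<Rightarrow> ('a \<Rightarrow> complex) \<Rightarrow> bool" where
  "char_on H \<chi> \<longleftrightarrow> (\<forall>a\<in>H. cmod (\<chi> a) = 1) \<and> (\<forall>a\<in>H. \<forall>b\<in>H. \<chi> (a \<otimes> b) = \<chi> a * \<chi> b)"

lemma char_on_one:
  assumes "subgroup H G" "char_on H \<chi>"
  shows "\<chi> \<one> = 1"
proof -
  have "\<chi> \<one> * \<chi> \<one> = \<chi> \<one> * 1" "\<chi> \<one> \<noteq> 0"
    using assms subgroup.one_closed[OF assms(1)] by (force simp: char_on_def)+
  then show ?thesis by (metis mult_left_cancel)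
qed

lemma char_on_pow:
  assumes H: "subgroup H G" and \<chi>: "char_on H \<chi>" and a: "a \<in> H"
  shows "\<chi> (a [^] (n::nat)) = \<chi> a ^ n"
proof (induction n)
  case 0 then show ?case using char_on_one[OF H \<chi>] by simp
next
  case (Suc n)
  have "a [^] n \<in> H" using subgroup_int_pow_closed[OF H a, of "int n"] by (simp add: int_pow_int)
  then show ?case using Suc \<chi> a by (simp add: char_on_def)
qed

lemma pow_mem_subgroup_iff:
  assumes H: "subgroup H G" and g: "g \<in> carrier G"
  shows "g [^] (m::nat) \<in> H \<longleftrightarrow> group.ord (G Mod H) (H #> g) dvd m"
proof -
  interpret N: normal H G using subgroup_imp_normal[OF H] .
  have "H #> g \<in> carrier (G Mod H)" unfolding carrier_FactGroup using g by blast
  from group.pow_eq_id[OF N.factorgroup_is_group this, of m]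
  have "(H #> g) [^]\<^bsub>G Mod H\<^esub> m = H \<longleftrightarrow> group.ord (G Mod H) (H #> g) dvd m"
    by (simp only: one_FactGroup)
  moreover have "(H #> g) [^]\<^bsub>G Mod H\<^esub> m = H #> g [^] m" using N.FactGroup_pow[OF g] .
  moreover have "H #> g [^] m = H \<longleftrightarrow> g [^] m \<in> H"
    using coset_join1[of H "g [^] m"] coset_join2[of "g [^] m" H] g H by auto
  ultimately show ?thesis by simp
qed

end

locale finite_comm_group = comm_group G for G :: "'a monoid" (structure) +
  assumes finite_carrier: "finite (carrier G)"
begin

lemma gchars_iff: "\<chi> \<in> gchars G \<longleftrightarrow> \<chi> \<in> extensional (carrier G) \<and> char_on (carrier G) \<chi>"
  unfolding gchars_def char_on_def by auto

(* Sending g to z is consistent with chi exactly because z^k = chi (g^k) for the period k of g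
   modulo H. *)
lemma char_extend_step:
  assumes H: "subgroup H G" and \<chi>: "char_on H \<chi>" and g: "g \<in> carrier G"
    and k: "\<And>m. g [^] m \<in> H \<longleftrightarrow> k dvd m"
    and z: "z ^ k = \<chi> (g [^] k)" "cmod z = 1"
  obtains H' \<psi> where "subgroup H' G" "H \<subseteq> H'" "g \<in> H'" "char_on H' \<psi>"
    "\<forall>a\<in>H. \<psi> a = \<chi> a" "\<psi> g = z"
proof -
  have HG: "H \<subseteq> carrier G" using H subgroup.subset by blast
  have \<chi>_pow: "\<chi> (g [^] m) = z ^ m" if "g [^] m \<in> H" for m
  proof -
    have "k dvd m" using k that by simp
    then obtain q where q: "m = k * q" by (elim dvdE)
    have "\<chi> (g [^] m) = \<chi> ((g [^] k) [^] q)" using g by (simp add: q nat_pow_pow)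
    also have "\<dots> = z ^ m" using char_on_pow[OF H \<chi>] k[of k] z(1) by (simp add: q power_mult)
    finally show ?thesis .
  qed
  have well_defined: "\<chi> h1 * z ^ i = \<chi> h2 * z ^ j"
    if "h1 \<in> H" "h2 \<in> H" "h1 \<otimes> g [^] i = h2 \<otimes> g [^] j" "i \<le> j" for h1 h2 and i j :: nat
  proof -
    obtain d where d: "j = i + d" using \<open>i \<le> j\<close> le_Suc_ex by blast
    have hc: "h1 \<in> carrier G" "h2 \<in> carrier G" using that(1,2) HG by auto
    have "g [^] j = g [^] d \<otimes> g [^] i" using g by (simp add: d nat_pow_mult add.commute)
    then have "h1 \<otimes> g [^] i = (h2 \<otimes> g [^] d) \<otimes> g [^] i"
      using that(3) hc g by (simp add: m_assoc)
    then have h1: "h1 = h2 \<otimes> g [^] d" using hc g by (simp add: r_cancel)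
    then have "g [^] d = inv h2 \<otimes> h1" using hc g by (simp add: m_assoc[symmetric])
    then have "g [^] d \<in> H" using that(1,2) H by (simp add: subgroup.m_closed subgroup.m_inv_closed)
    then have "\<chi> h1 = \<chi> h2 * z ^ d" using h1 \<chi> that(2) \<chi>_pow by (simp add: char_on_def)
    then show ?thesis by (simp add: d power_add)
  qed
  define H' where "H' = {h \<otimes> g [^] (j::nat) | h j. h \<in> H}"
  define \<psi> where "\<psi> x = (SOME c. \<exists>h\<in>H. \<exists>j::nat. x = h \<otimes> g [^] j \<and> c = \<chi> h * z ^ j)" for x
  have \<psi>: "\<psi> (h \<otimes> g [^] j) = \<chi> h * z ^ j" if "h \<in> H" for h and j :: nat
    unfolding \<psi>_def
  proof (rule someI2)
    show "\<exists>h'\<in>H. \<exists>j'. h \<otimes> g [^] j = h' \<otimes> g [^] j' \<and> \<chi> h * z ^ j = \<chi> h' * z ^ j'"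
      using that by blast
    fix c assume "\<exists>h'\<in>H. \<exists>j'. h \<otimes> g [^] j = h' \<otimes> g [^] j' \<and> c = \<chi> h' * z ^ j'"
    then show "c = \<chi> h * z ^ j"
      using well_defined that by (metis nle_le)
  qed
  have mult: "(h1 \<otimes> g [^] i) \<otimes> (h2 \<otimes> g [^] j) = (h1 \<otimes> h2) \<otimes> g [^] (i + j)"
    if "h1 \<in> H" "h2 \<in> H" for h1 h2 and i j :: nat
  proof -
    have "h1 \<in> carrier G" "h2 \<in> carrier G" using that HG by auto
    then show ?thesis using g by (simp flip: nat_pow_mult add: m_ac)
  qed
  have H'I: "h \<otimes> g [^] j \<in> H'" if "h \<in> H" for h and j :: nat
    unfolding H'_def using that by blast
  show thesis
  proof
    show "subgroup H' G"
    proof (rule finite_subgroupI[OF finite_carrier])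
      show "H' \<subseteq> carrier G" unfolding H'_def using HG g by auto
      show "\<one> \<in> H'" using H'I[of \<one> 0] subgroup.one_closed[OF H] by simp
      show "a \<otimes> b \<in> H'" if "a \<in> H'" "b \<in> H'" for a b
        using that mult H unfolding H'_def by (force intro: subgroup.m_closed)
    qed
    show "H \<subseteq> H'" using H'I[of _ 0] HG by (auto simp: subset_iff)
    show "g \<in> H'" using H'I[of \<one> 1] subgroup.one_closed[OF H] g by simp
    show "\<forall>a\<in>H. \<psi> a = \<chi> a" using \<psi>[of _ 0] HG by (auto simp: subset_iff)
    show "\<psi> g = z" using \<psi>[of \<one> 1] char_on_one[OF H \<chi>] H g by (simp add: subgroup.one_closed)
    show "char_on H' \<psi>"
      unfolding char_on_def H'_def using \<psi> mult \<chi> z(2)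
      by (auto simp: char_on_def norm_mult norm_power power_add subgroup.m_closed[OF H])
  qed
qed

lemma subgroup_period:
  assumes H: "subgroup H G" and g: "g \<in> carrier G"
  obtains k :: nat where "0 < k" "\<And>m::nat. g [^] m \<in> H \<longleftrightarrow> k dvd m"
proof -
  interpret N: normal H G using subgroup_imp_normal[OF H] .
  have "finite (carrier (G Mod H))" unfolding carrier_FactGroup using finite_carrier by blast
  moreover have "H #> g \<in> carrier (G Mod H)" unfolding carrier_FactGroup using g by blast
  ultimately have "0 < group.ord (G Mod H) (H #> g)"
    using group.ord_ge_1[OF N.factorgroup_is_group] by fastforce
  then show thesis using that pow_mem_subgroup_iff[OF H g] by blast
qed

lemma char_extend:
  assumes "subgroup H G" "char_on H \<chi>"
  shows "\<exists>\<psi>\<in>gchars G. \<forall>a\<in>H. \<psi> a = \<chi> a"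
  using assms
proof (induction "card (carrier G - H)" arbitrary: H \<chi> rule: less_induct)
  case less
  note H = less.prems(1) and \<chi> = less.prems(2)
  show ?case
  proof (cases "H = carrier G")
    case True
    then have "restrict \<chi> (carrier G) \<in> gchars G" using \<chi> by (simp add: gchars_iff char_on_def)
    then show ?thesis using True by (intro bexI[of _ "restrict \<chi> (carrier G)"]) auto
  next
    case False
    then obtain g where g: "g \<in> carrier G" "g \<notin> H" using subgroup.subset[OF H] by blast
    obtain k where k: "0 < k" "\<And>m::nat. g [^] m \<in> H \<longleftrightarrow> k dvd m" using subgroup_period[OF H g(1)] by blast
    have "cmod (\<chi> (g [^] k)) = 1" using \<chi> k(2)[of k] by (simp add: char_on_def)
    then obtain z where z: "z ^ k = \<chi> (g [^] k)" "cmod z = 1" using unit_complex_root k(1) by blast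
    obtain H' \<psi> where H': "subgroup H' G" "H \<subseteq> H'" "g \<in> H'" "char_on H' \<psi>" "\<forall>a\<in>H. \<psi> a = \<chi> a"
      using char_extend_step[OF H \<chi> g(1) k(2) z] by metis
    have "carrier G - H' \<subset> carrier G - H" using H'(2,3) g by blast
    then have "card (carrier G - H') < card (carrier G - H)"
      using finite_carrier by (intro psubset_card_mono) auto
    then obtain \<phi> where "\<phi> \<in> gchars G" "\<forall>a\<in>H'. \<phi> a = \<psi> a" using less.hyps H'(1,4) by blast
    then show ?thesis using H'(2,5) by (intro bexI[of _ \<phi>]) auto
  qed
qed

lemma exists_char_ne_one:
  assumes y: "y \<in> carrier G" "y \<noteq> \<one>"
  obtains \<chi> where "\<chi> \<in> gchars G" "\<chi> y \<noteq> 1"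
proof -
  have triv: "char_on {\<one>} (\<lambda>_. 1)" by (simp add: char_on_def)
  obtain k where k: "0 < k" "\<And>m::nat. y [^] m \<in> {\<one>} \<longleftrightarrow> k dvd m"
    using subgroup_period[OF triv_subgroup y(1)] by blast
  have "k \<noteq> 1" using k(2)[of 1] y by auto
  then have "2 \<le> k" using k(1) by linarith
  define z where "z = cis (2 * pi / k)"
  have "cos (2 * pi / k) < cos 0"
    using \<open>2 \<le> k\<close> by (intro cos_monotone_0_pi) (auto simp: field_simps)
  then have "z \<noteq> 1" unfolding z_def by (auto simp: complex_eq_iff)
  have "z ^ k = (\<lambda>_. 1) (y [^] k)" "cmod z = 1" using k(1) by (simp_all add: z_def DeMoivre)
  then obtain H' \<psi> where H': "subgroup H' G" "char_on H' \<psi>" "y \<in> H'" "\<psi> y = z"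
    using char_extend_step[OF triv_subgroup triv y(1) k(2)] by metis
  obtain \<chi> where "\<chi> \<in> gchars G" "\<forall>a\<in>H'. \<chi> a = \<psi> a" using char_extend[OF H'(1,2)] by blast
  then show thesis using that H'(3,4) \<open>z \<noteq> 1\<close> by auto
qed

lemma gchars_one: "\<chi> \<in> gchars G \<Longrightarrow> \<chi> \<one> = 1"
  using char_on_one[OF subgroup_self] by (simp add: gchars_iff)

lemma finite_gchars: "finite (gchars G)"
proof -
  let ?N = "card (carrier G)"
  have "gchars G \<subseteq> (\<Pi>\<^sub>E a\<in>carrier G. {z. z ^ ?N = 1})"
  proof
    fix \<chi> assume \<chi>: "\<chi> \<in> gchars G"
    have "\<chi> a ^ ?N = 1" if "a \<in> carrier G" for a
      using char_on_pow[OF subgroup_self _ that, of \<chi> ?N] \<chi> gchars_one[OF \<chi>]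
        power_order_eq_one[OF finite_carrier that] by (simp add: gchars_iff)
    then show "\<chi> \<in> (\<Pi>\<^sub>E a\<in>carrier G. {z. z ^ ?N = 1})" using \<chi> by (auto simp: gchars_iff PiE_def)
  qed
  moreover have "0 < ?N" using finite_carrier card_gt_0_iff by blast
  then have "finite (\<Pi>\<^sub>E a\<in>carrier G. {z::complex. z ^ ?N = 1})"
    using finite_carrier by (intro finite_PiE finite_roots_unity) auto
  ultimately show ?thesis by (rule finite_subset)
qed

lemma sum_gchars:
  assumes y: "y \<in> carrier G"
  shows "(\<Sum>\<chi>\<in>gchars G. \<chi> y) = (if y = \<one> then of_nat (card (gchars G)) else 0)"
proof (cases "y = \<one>")
  case True
  have "(\<Sum>\<chi>\<in>gchars G. \<chi> \<one>) = (\<Sum>\<chi>\<in>gchars G. 1)" by (rule sum.cong) (simp_all add: gchars_one)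
  then show ?thesis using True by simp
next
  case False
  obtain \<psi> where \<psi>: "\<psi> \<in> gchars G" "\<psi> y \<noteq> 1" using exists_char_ne_one[OF y False] .
  have \<psi>_nonzero: "\<psi> a \<noteq> 0" if "a \<in> carrier G" for a
    using \<psi>(1) that by (auto simp: gchars_iff char_on_def)
  let ?f = "\<lambda>\<chi>. \<lambda>a\<in>carrier G. \<psi> a * \<chi> a"
  have "(\<Sum>\<chi>\<in>gchars G. \<chi> y) = 0"
  proof (rule sum_eq_0_if_scaled_by_injection[OF finite_gchars _ _ _ \<psi>(2)])
    show "inj_on ?f (gchars G)"
    proof (rule inj_onI)
      fix \<chi>1 \<chi>2 assume \<chi>: "\<chi>1 \<in> gchars G" "\<chi>2 \<in> gchars G" and eq: "?f \<chi>1 = ?f \<chi>2"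
      have "\<chi>1 a = \<chi>2 a" if "a \<in> carrier G" for a
        using fun_cong[OF eq, of a] \<psi>_nonzero[OF that] that by simp
      then show "\<chi>1 = \<chi>2" using \<chi> by (intro extensionalityI[of _ "carrier G"]) (auto simp: gchars_iff)
    qed
    show "?f ` gchars G \<subseteq> gchars G"
      using \<psi>(1) by (auto simp: gchars_iff char_on_def norm_mult)
    show "?f \<chi> y = \<psi> y * \<chi> y" for \<chi> using y by simp
  qed
  then show ?thesis using False by simp
qed

lemma sum_char_over_carrier:
  assumes \<chi>: "\<chi> \<in> gchars G"
  shows "(\<Sum>a\<in>carrier G. \<chi> a) = (if \<chi> = (\<lambda>a\<in>carrier G. 1) then of_nat (card (carrier G)) else 0)"
proof (cases "\<chi> = (\<lambda>a\<in>carrier G. 1)")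
  case True then show ?thesis by simp
next
  case False
  then obtain b where b: "b \<in> carrier G" "\<chi> b \<noteq> 1"
    using \<chi> extensionalityI[of \<chi> "carrier G" "\<lambda>a\<in>carrier G. 1"] by (auto simp: gchars_iff)
  have "(\<Sum>a\<in>carrier G. \<chi> a) = 0"
  proof (rule sum_eq_0_if_scaled_by_injection[OF finite_carrier _ _ _ b(2)])
    show "inj_on (\<lambda>a. b \<otimes> a) (carrier G)" using b(1) by (auto intro: inj_onI)
    show "(\<lambda>a. b \<otimes> a) ` carrier G \<subseteq> carrier G" using b(1) by auto
    show "\<chi> (b \<otimes> a) = \<chi> b * \<chi> a" if "a \<in> carrier G" for a
      using \<chi> b(1) that by (simp add: gchars_iff char_on_def)
  qed
  then show ?thesis using False by simp
qed

lemma card_gchars: "card (gchars G) = card (carrier G)"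
proof -
  have "of_nat (card (carrier G)) = (\<Sum>\<chi>\<in>gchars G. \<Sum>a\<in>carrier G. \<chi> a :: complex)"
  proof -
    have "(\<lambda>a\<in>carrier G. 1) \<in> gchars G" by (simp add: gchars_iff char_on_def)
    then show ?thesis using sum_char_over_carrier finite_gchars by (simp add: sum.delta' cong: sum.cong)
  qed
  also have "\<dots> = (\<Sum>a\<in>carrier G. \<Sum>\<chi>\<in>gchars G. \<chi> a)" by (rule sum.swap)
  also have "\<dots> = of_nat (card (gchars G))"
    using sum_gchars finite_carrier by (simp add: sum.delta' cong: sum.cong)
  finally show ?thesis by (simp only: of_nat_eq_iff)
qed

end

section \<open>The cochain groups\<close>

definition fam_one :: "(int \<Rightarrow> 'c set) \<Rightarrow> (int \<Rightarrow> 'g monoid) \<Rightarrow> int \<Rightarrow> ('c,'g) fam" where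
  "fam_one K G p = (\<lambda>n y. if y \<in> K n then \<one>\<^bsub>G (n - p)\<^esub> else undefined)"

definition fam_group :: "(int \<Rightarrow> 'c set) \<Rightarrow> (int \<Rightarrow> 'g monoid) \<Rightarrow> int \<Rightarrow> ('c,'g) fam monoid" where
  "fam_group K G p = \<lparr>carrier = homsup K G p, monoid.mult = fam_add K G p, one = fam_one K G p\<rparr>"

lemma fam_group_simps [simp]:
  "carrier (fam_group K G p) = homsup K G p"
  "monoid.mult (fam_group K G p) = fam_add K G p"
  "one (fam_group K G p) = fam_one K G p"
  by (simp_all add: fam_group_def)

lemma gchars_fam_group: "gchars (fam_group K G p) = homsub K G p"
  unfolding gchars_def homsub_def by simp

lemma homsupI:
  "(\<And>n y. y \<in> K n \<Longrightarrow> f n y \<in> carrier (G (n - p))) \<Longrightarrow> (\<And>n y. y \<notin> K n \<Longrightarrow> f n y = undefined)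
    \<Longrightarrow> f \<in> homsup K G p"
  unfolding homsup_def by auto

lemma homsupD: "f \<in> homsup K G p \<Longrightarrow> y \<in> K n \<Longrightarrow> f n y \<in> carrier (G (n - p))"
  unfolding homsup_def by auto

lemma homsup_undefined: "f \<in> homsup K G p \<Longrightarrow> y \<notin> K n \<Longrightarrow> f n y = undefined"
  unfolding homsup_def by auto

lemma homsup_eqI:
  "f \<in> homsup K G p \<Longrightarrow> g \<in> homsup K G p \<Longrightarrow> (\<And>n y. y \<in> K n \<Longrightarrow> f n y = g n y) \<Longrightarrow> f = g"
  by (metis homsup_undefined ext)

lemma homsub_fam_add:
  "s \<in> homsub K G p \<Longrightarrow> f \<in> homsup K G p \<Longrightarrow> g \<in> homsup K G p \<Longrightarrow>
    s (fam_add K G p f g) = s f * s g"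
  unfolding homsub_def by blast

locale cochain_data =
  fixes K :: "int \<Rightarrow> 'c set" and dC :: "int \<Rightarrow> 'c \<Rightarrow> 'c \<Rightarrow> int"
    and G :: "int \<Rightarrow> 'g monoid" and dG :: "int \<Rightarrow> 'g \<Rightarrow> 'g"
  assumes finite_cells: "\<And>n. finite (K n)"
    and finitely_many_degrees: "finite {n. K n \<noteq> {}}"
    and comm_groups: "\<And>n. comm_group (G n)"
    and finite_groups: "\<And>n. finite (carrier (G n))"
    and dG_hom: "\<And>n. dG n \<in> hom (G n) (G (n - 1))"
begin

sublocale G: finite_comm_group "G n" for n
  using comm_groups finite_groups by (simp add: finite_comm_group_def finite_comm_group_axioms_def)

lemma fam_group_comm_group: "comm_group (fam_group K G p)"
proof (rule comm_groupI)
  fix f g h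
  assume f: "f \<in> carrier (fam_group K G p)" and g: "g \<in> carrier (fam_group K G p)"
    and h: "h \<in> carrier (fam_group K G p)"
  show "f \<otimes>\<^bsub>fam_group K G p\<^esub> g \<in> carrier (fam_group K G p)"
    using f g by (auto intro!: homsupI simp: fam_add_def homsupD)
  show "f \<otimes>\<^bsub>fam_group K G p\<^esub> g \<otimes>\<^bsub>fam_group K G p\<^esub> h = f \<otimes>\<^bsub>fam_group K G p\<^esub> (g \<otimes>\<^bsub>fam_group K G p\<^esub> h)"
    using f g h by (auto simp: fam_add_def homsupD G.m_assoc fun_eq_iff)
  show "f \<otimes>\<^bsub>fam_group K G p\<^esub> g = g \<otimes>\<^bsub>fam_group K G p\<^esub> f"
    using f g by (auto simp: fam_add_def homsupD G.m_comm fun_eq_iff)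
  show "\<one>\<^bsub>fam_group K G p\<^esub> \<otimes>\<^bsub>fam_group K G p\<^esub> f = f"
    using f by (auto simp: fam_add_def fam_one_def homsupD homsup_undefined fun_eq_iff)
  let ?g = "\<lambda>n y. if y \<in> K n then inv\<^bsub>G (n - p)\<^esub> f n y else undefined"
  have "?g \<in> carrier (fam_group K G p) \<and> ?g \<otimes>\<^bsub>fam_group K G p\<^esub> f = \<one>\<^bsub>fam_group K G p\<^esub>"
    using f by (auto intro!: homsupI simp: fam_add_def fam_one_def homsupD fun_eq_iff)
  then show "\<exists>g\<in>carrier (fam_group K G p). g \<otimes>\<^bsub>fam_group K G p\<^esub> f = \<one>\<^bsub>fam_group K G p\<^esub>" by blast
qed (auto intro!: homsupI simp: fam_one_def)

lemma finite_homsup: "finite (homsup K G p)"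
proof -
  let ?S = "Sigma {n. K n \<noteq> {}} K"
  have "homsup K G p \<subseteq> curry ` (\<Pi>\<^sub>E (n, y)\<in>?S. carrier (G (n - p)))"
  proof
    fix f assume f: "f \<in> homsup K G p"
    have "f = curry (\<lambda>(n, y)\<in>?S. f n y)" using homsup_undefined[OF f] by (auto simp: fun_eq_iff)
    moreover have "(\<lambda>(n, y)\<in>?S. f n y) \<in> (\<Pi>\<^sub>E (n, y)\<in>?S. carrier (G (n - p)))" using homsupD[OF f] by auto
    ultimately show "f \<in> curry ` (\<Pi>\<^sub>E (n, y)\<in>?S. carrier (G (n - p)))" by blast
  qed
  moreover have "finite ?S" using finitely_many_degrees finite_cells by (intro finite_SigmaI) auto
  then have "finite (\<Pi>\<^sub>E (n, y)\<in>?S. carrier (G (n - p)))" using finite_groups by (intro finite_PiE) auto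
  ultimately show ?thesis by (meson finite_imageI finite_subset)
qed

sublocale F: finite_comm_group "fam_group K G p" for p
  using fam_group_comm_group finite_homsup
  by (simp add: finite_comm_group_def finite_comm_group_axioms_def)

lemma fam_one_closed: "fam_one K G p \<in> homsup K G p"
  using F.one_closed[of p] by simp

lemma fam_add_closed: "f \<in> homsup K G p \<Longrightarrow> g \<in> homsup K G p \<Longrightarrow> fam_add K G p f g \<in> homsup K G p"
  using F.m_closed[of f p g] by simp

lemma fam_add_assoc:
  "f \<in> homsup K G p \<Longrightarrow> g \<in> homsup K G p \<Longrightarrow> h \<in> homsup K G p \<Longrightarrow>
    fam_add K G p (fam_add K G p f g) h = fam_add K G p f (fam_add K G p g h)"
  using F.m_assoc[of f p g h] by simp

lemma fam_add_comm: "f \<in> homsup K G p \<Longrightarrow> g \<in> homsup K G p \<Longrightarrow> fam_add K G p f g = fam_add K G p g f"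
  using F.m_comm[of f p g] by simp

lemma cobdry_closed:
  assumes f: "f \<in> homsup K G p"
  shows "cobdry K dC G dG p f \<in> homsup K G (p + 1)"
proof (rule homsupI)
  fix n y assume y: "y \<in> K n"
  have idx: "n - 1 - p = n - (p + 1)" "n - p - 1 = n - (p + 1)" by simp_all
  have "f (n - 1) z [^]\<^bsub>G (n - (p + 1))\<^esub> dC n y z \<in> carrier (G (n - (p + 1)))" if "z \<in> K (n - 1)" for z
    using homsupD[OF f that] idx by simp
  moreover have "dG (n - p) (f n y) \<in> carrier (G (n - (p + 1)))"
    using hom_in_carrier[OF dG_hom homsupD[OF f y]] idx by simp
  ultimately show "cobdry K dC G dG p f n y \<in> carrier (G (n - (p + 1)))"
    unfolding cobdry_def using y by (simp add: Pi_iff)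
qed (simp add: cobdry_def)

lemma cobdry_fam_add:
  assumes f: "f \<in> homsup K G p" and g: "g \<in> homsup K G p"
  shows "cobdry K dC G dG p (fam_add K G p f g) =
    fam_add K G (p + 1) (cobdry K dC G dG p f) (cobdry K dC G dG p g)"
proof (intro ext)
  fix n y
  show "cobdry K dC G dG p (fam_add K G p f g) n y =
    fam_add K G (p + 1) (cobdry K dC G dG p f) (cobdry K dC G dG p g) n y"
  proof (cases "y \<in> K n")
    case False
    then show ?thesis by (simp add: cobdry_def fam_add_def)
  next
    case y: True
    define q where "q = n - (p + 1)"
    have idx: "n - 1 - p = q" "n - p - 1 = q" "n - (p + 1) = q" unfolding q_def by simp_all
    define sgn where "sgn a = (if even p then inv\<^bsub>G q\<^esub> a else a)" for a
    have sgn: "sgn a \<in> carrier (G q)" "sgn (a \<otimes>\<^bsub>G q\<^esub> b) = sgn a \<otimes>\<^bsub>G q\<^esub> sgn b"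
      if "a \<in> carrier (G q)" "b \<in> carrier (G q)" for a b
      using that by (simp_all add: sgn_def G.inv_mult)
    define d where "d a = dG (n - p) a" for a
    have d: "d a \<in> carrier (G q)" "d (a \<otimes>\<^bsub>G (n - p)\<^esub> b) = d a \<otimes>\<^bsub>G q\<^esub> d b"
      if "a \<in> carrier (G (n - p))" "b \<in> carrier (G (n - p))" for a b
      using hom_in_carrier[OF dG_hom that(1)] hom_mult[OF dG_hom that] idx by (simp_all add: d_def)
    define P where "P h = finprod (G q) (\<lambda>z. h (n - 1) z [^]\<^bsub>G q\<^esub> dC n y z) (K (n - 1))" for h
    have cobdry_at: "cobdry K dC G dG p h n y = P h \<otimes>\<^bsub>G q\<^esub> sgn (d (h n y))" for h
      using y by (simp add: cobdry_def P_def sgn_def d_def idx)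
    have fc: "f (n - 1) z \<in> carrier (G q)" "g (n - 1) z \<in> carrier (G q)" if "z \<in> K (n - 1)" for z
      using homsupD[OF f that] homsupD[OF g that] idx by simp_all
    have P: "P f \<in> carrier (G q)" "P g \<in> carrier (G q)"
      unfolding P_def using fc by (auto intro!: G.finprod_closed)
    have "P (fam_add K G p f g) = finprod (G q)
        (\<lambda>z. f (n - 1) z [^]\<^bsub>G q\<^esub> dC n y z \<otimes>\<^bsub>G q\<^esub> g (n - 1) z [^]\<^bsub>G q\<^esub> dC n y z) (K (n - 1))"
      unfolding P_def by (rule G.finprod_cong') (auto simp: fam_add_def idx fc G.int_pow_distrib)
    also have "\<dots> = P f \<otimes>\<^bsub>G q\<^esub> P g" unfolding P_def by (rule G.finprod_multf) (auto simp: fc)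
    finally have P_add: "P (fam_add K G p f g) = P f \<otimes>\<^bsub>G q\<^esub> P g" .
    have fg: "f n y \<in> carrier (G (n - p))" "g n y \<in> carrier (G (n - p))"
      using homsupD[OF f y] homsupD[OF g y] by simp_all
    have "cobdry K dC G dG p (fam_add K G p f g) n y =
        (P f \<otimes>\<^bsub>G q\<^esub> P g) \<otimes>\<^bsub>G q\<^esub> (sgn (d (f n y)) \<otimes>\<^bsub>G q\<^esub> sgn (d (g n y)))"
      unfolding cobdry_at P_add using y fg by (simp add: fam_add_def d sgn)
    also have "\<dots> = (P f \<otimes>\<^bsub>G q\<^esub> sgn (d (f n y))) \<otimes>\<^bsub>G q\<^esub> (P g \<otimes>\<^bsub>G q\<^esub> sgn (d (g n y)))"
      using P fg by (simp add: d sgn G.m_ac)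
    also have "\<dots> = fam_add K G (p + 1) (cobdry K dC G dG p f) (cobdry K dC G dG p g) n y"
      using y by (simp add: fam_add_def cobdry_at idx)
    finally show ?thesis .
  qed
qed

lemma cobdry_group_hom: "group_hom (fam_group K G p) (fam_group K G (p + 1)) (cobdry K dC G dG p)"
  by (intro group_hom.intro group_hom_axioms.intro F.is_group homI)
     (simp_all add: cobdry_closed cobdry_fam_add)

lemma cobdry_fam_one: "cobdry K dC G dG p (fam_one K G p) = fam_one K G (p + 1)"
  using group_hom.hom_one[OF cobdry_group_hom] by simp

end

section \<open>Averages and products of operators\<close>

definition mat_avg :: "'a set \<Rightarrow> ('a \<Rightarrow> complex) \<Rightarrow> ('a \<Rightarrow> ('c,'g) op) \<Rightarrow> ('c,'g) op" where
  "mat_avg S w M = (\<lambda>a b. (1 / of_nat (card S)) * (\<Sum>t\<in>S. w t * M t a b))"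

lemma mat_mult_mat_avg:
  assumes \<phi>: "bij_betw \<phi> (S1 \<times> S2) S"
    and w: "\<And>h t. h \<in> S1 \<Longrightarrow> t \<in> S2 \<Longrightarrow> w1 h * w2 t = w (\<phi> (h, t))"
    and M: "\<And>h t. h \<in> S1 \<Longrightarrow> t \<in> S2 \<Longrightarrow> mat_mult B (M1 h) (M2 t) a b = M (\<phi> (h, t)) a b"
  shows "mat_mult B (mat_avg S1 w1 M1) (mat_avg S2 w2 M2) a b = mat_avg S w M a b"
proof -
  define \<alpha> :: complex where "\<alpha> = 1 / of_nat (card S1) * (1 / of_nat (card S2))"
  have "mat_avg S1 w1 M1 a c * mat_avg S2 w2 M2 c b =
      \<alpha> * (\<Sum>h\<in>S1. \<Sum>t\<in>S2. (w1 h * w2 t) * (M1 h a c * M2 t c b))" for c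
  proof -
    have "mat_avg S1 w1 M1 a c * mat_avg S2 w2 M2 c b =
        \<alpha> * ((\<Sum>h\<in>S1. w1 h * M1 h a c) * (\<Sum>t\<in>S2. w2 t * M2 t c b))"
      unfolding mat_avg_def \<alpha>_def by (simp only: ac_simps)
    then show ?thesis unfolding sum_product by (simp only: ac_simps)
  qed
  then have "mat_mult B (mat_avg S1 w1 M1) (mat_avg S2 w2 M2) a b =
      \<alpha> * (\<Sum>c\<in>B. \<Sum>h\<in>S1. \<Sum>t\<in>S2. (w1 h * w2 t) * (M1 h a c * M2 t c b))"
    by (simp add: mat_mult_def sum_distrib_left)
  also have "\<dots> = \<alpha> * (\<Sum>h\<in>S1. \<Sum>t\<in>S2. \<Sum>c\<in>B. (w1 h * w2 t) * (M1 h a c * M2 t c b))"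
    by (simp only: sum.swap[of _ B] sum.swap[of _ B S2])
  also have "\<dots> = \<alpha> * (\<Sum>h\<in>S1. \<Sum>t\<in>S2. (w1 h * w2 t) * mat_mult B (M1 h) (M2 t) a b)"
    by (simp add: mat_mult_def sum_distrib_left)
  also have "\<dots> = \<alpha> * (\<Sum>(h, t)\<in>S1 \<times> S2. w (\<phi> (h, t)) * M (\<phi> (h, t)) a b)"
    using w M by (simp add: sum.cartesian_product)
  also have "\<dots> = mat_avg S w M a b"
    using bij_betw_same_card[OF \<phi>] sum.reindex_bij_betw[OF \<phi>, of "\<lambda>u. w u * M u a b"]
    by (simp add: mat_avg_def \<alpha>_def card_cartesian_product flip: of_nat_mult)
  finally show ?thesis .
qed

lemma mat_prod_list_diagonal:
  assumes B: "finite B"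
    and diag: "\<And>M a b. M \<in> set Ms \<Longrightarrow> a \<in> B \<Longrightarrow> b \<in> B \<Longrightarrow> a \<noteq> b \<Longrightarrow> M a b = 0"
    and a: "a \<in> B" and b: "b \<in> B"
  shows "mat_prod_list B Ms a b = (if a = b then (\<Prod>M\<leftarrow>Ms. M b b) else 0)"
  using diag a
proof (induction Ms arbitrary: a)
  case Nil
  then show ?case by (simp add: mat_prod_list_def mat_one_def)
next
  case (Cons M Ms)
  have "mat_prod_list B (M # Ms) a b = (\<Sum>c\<in>B. M a c * mat_prod_list B Ms c b)"
    by (simp add: mat_prod_list_def mat_mult_def)
  also have "\<dots> = (\<Sum>c\<in>B. if c = a then M a a * mat_prod_list B Ms a b else 0)"
    using Cons.prems by (intro sum.cong) auto
  also have "\<dots> = M a a * mat_prod_list B Ms a b" using B Cons.prems(2) by simp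
  finally show ?case using Cons by simp
qed

lemma prod_list_indicator:
  "(\<Prod>x\<leftarrow>xs. if P x then 1 else 0) = (if \<forall>x\<in>set xs. P x then 1 else (0::'a::comm_semiring_1))"
  by (induction xs) auto

lemma locA_eq_mat_avg:
  "locA K dC G dG n x r = mat_avg (carrier (G (n + 1))) r (\<lambda>h. opA K dC G dG (costar K G (-1) n x h))"
  by (simp add: locA_def mat_avg_def)

definition fams_supported_on ::
    "(int \<Rightarrow> 'c set) \<Rightarrow> (int \<Rightarrow> 'g monoid) \<Rightarrow> int \<Rightarrow> (int \<times> 'c) set \<Rightarrow> ('c,'g) fam set" where
  "fams_supported_on K G p S =
    {f \<in> homsup K G p. \<forall>n y. y \<in> K n \<longrightarrow> (n, y) \<notin> S \<longrightarrow> f n y = \<one>\<^bsub>G (n - p)\<^esub>}"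

context cochain_data
begin

lemma opP_mult:
  assumes u1: "u1 \<in> homsup K G 0" and u2: "u2 \<in> homsup K G 0" and b: "b \<in> homsup K G 0"
  shows "mat_mult (homsup K G 0) (opP K G u1) (opP K G u2) a b = opP K G (fam_add K G 0 u1 u2) a b"
proof -
  let ?c = "fam_add K G 0 b u2"
  have c: "?c \<in> homsup K G 0" using fam_add_closed[OF b u2] .
  have "mat_mult (homsup K G 0) (opP K G u1) (opP K G u2) a b =
      (\<Sum>c\<in>homsup K G 0. if c = ?c then opP K G u1 a ?c else 0)"
    unfolding mat_mult_def by (rule sum.cong) (auto simp: opP_def)
  also have "\<dots> = opP K G u1 a ?c" using c finite_homsup by simp
  also have "\<dots> = opP K G (fam_add K G 0 u1 u2) a b"
    using fam_add_assoc[OF b u2 u1] fam_add_comm[OF u2 u1] by (simp add: opP_def)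
  finally show ?thesis .
qed

lemma opA_mult:
  assumes "t1 \<in> homsup K G (-1)" "t2 \<in> homsup K G (-1)" "b \<in> homsup K G 0"
  shows "mat_mult (homsup K G 0) (opA K dC G dG t1) (opA K dC G dG t2) a b =
    opA K dC G dG (fam_add K G (-1) t1 t2) a b"
  using opP_mult[OF cobdry_closed[OF assms(1), simplified] cobdry_closed[OF assms(2), simplified] assms(3)]
    cobdry_fam_add[OF assms(1,2)]
  by (simp add: opA_def)

lemma costar_closed: "x \<in> K n \<Longrightarrow> h \<in> carrier (G (n - p)) \<Longrightarrow> costar K G p n x h \<in> homsup K G p"
  by (rule homsupI) (auto simp: costar_def)

lemma fam_add_costar:
  assumes "t \<in> homsup K G p" "x \<in> K n"
  shows "fam_add K G p (costar K G p n x h) t k y =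
    (if y \<in> K k then if (k, y) = (n, x) then h \<otimes>\<^bsub>G (n - p)\<^esub> t n x else t k y else undefined)"
  using homsupD[OF assms(1), of y k] by (auto simp: fam_add_def costar_def)

lemma fams_supported_on_empty: "fams_supported_on K G p {} = {fam_one K G p}"
  using fam_one_closed by (auto simp: fams_supported_on_def fam_one_def intro: homsup_eqI)

lemma fams_supported_on_cells: "Sigma UNIV K \<subseteq> S \<Longrightarrow> fams_supported_on K G p S = homsup K G p"
  by (auto simp: fams_supported_on_def)

lemma fams_supported_on_insert:
  assumes x: "x \<in> K n" and nx: "(n, x) \<notin> S"
  shows "bij_betw (\<lambda>(h, t). fam_add K G p (costar K G p n x h) t)
    (carrier (G (n - p)) \<times> fams_supported_on K G p S) (fams_supported_on K G p (insert (n, x) S))"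
proof (rule bij_betwI)
  let ?erase = "\<lambda>t. t(n := (t n)(x := \<one>\<^bsub>G (n - p)\<^esub>))"
  show "(\<lambda>(h, t). fam_add K G p (costar K G p n x h) t) \<in>
      carrier (G (n - p)) \<times> fams_supported_on K G p S \<rightarrow> fams_supported_on K G p (insert (n, x) S)"
    using x fam_add_closed[OF costar_closed[OF x]]
    by (auto simp: fams_supported_on_def fam_add_costar)
  show "(\<lambda>t. (t n x, ?erase t)) \<in>
      fams_supported_on K G p (insert (n, x) S) \<rightarrow> carrier (G (n - p)) \<times> fams_supported_on K G p S"
    using x by (auto simp: fams_supported_on_def homsupD homsup_undefined intro!: homsupI)
  show "(\<lambda>t. (t n x, ?erase t)) ((\<lambda>(h, t). fam_add K G p (costar K G p n x h) t) ht) = ht"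
    if "ht \<in> carrier (G (n - p)) \<times> fams_supported_on K G p S" for ht
    using that x nx by (auto simp: fams_supported_on_def fam_add_costar homsup_undefined fun_eq_iff)
  show "(\<lambda>(h, t). fam_add K G p (costar K G p n x h) t) (t n x, ?erase t) = t"
    if "t \<in> fams_supported_on K G p (insert (n, x) S)" for t
  proof -
    have t: "t \<in> homsup K G p" using that by (simp add: fams_supported_on_def)
    then have "?erase t \<in> homsup K G p" using x by (auto intro!: homsupI simp: homsupD homsup_undefined)
    then show ?thesis
      using t x by (auto simp: fam_add_costar homsupD homsup_undefined fun_eq_iff)
  qed
qed

lemma mat_prod_list_locA:
  assumes s: "s \<in> homsub K G (-1)" and b: "b \<in> homsup K G 0"
  shows "distinct xs \<Longrightarrow> set xs \<subseteq> Sigma UNIV K \<Longrightarrow> a \<in> homsup K G 0 \<Longrightarrow>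
    mat_prod_list (homsup K G 0) (map (\<lambda>(n, x). locA K dC G dG n x (s_comp K G s n x)) xs) a b =
    mat_avg (fams_supported_on K G (-1) (set xs)) s (opA K dC G dG) a b"
proof (induction xs arbitrary: a)
  case Nil
  have "s (fam_one K G (-1)) = 1" using F.gchars_one s by (simp add: gchars_fam_group)
  moreover have "fam_add K G 0 b (fam_one K G 0) = b" using F.r_one[of b 0] b by simp
  ultimately show ?case
    by (simp add: mat_prod_list_def mat_one_def mat_avg_def fams_supported_on_empty opA_def opP_def
        cobdry_fam_one[of "-1", simplified])
next
  case (Cons nx xs)
  obtain n x where nx: "nx = (n, x)" by fastforce
  have x: "x \<in> K n" "(n, x) \<notin> set xs" and xs: "distinct xs" "set xs \<subseteq> Sigma UNIV K"
    using Cons.prems nx by auto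
  let ?T = "fams_supported_on K G (-1) (set xs)"
  have T: "?T \<subseteq> homsup K G (-1)" by (auto simp: fams_supported_on_def)
  have "mat_prod_list (homsup K G 0) (map (\<lambda>(n, x). locA K dC G dG n x (s_comp K G s n x)) (nx # xs)) a b =
      mat_mult (homsup K G 0) (locA K dC G dG n x (s_comp K G s n x)) (mat_avg ?T s (opA K dC G dG)) a b"
    using Cons.IH[OF xs] by (simp add: nx mat_prod_list_def mat_mult_def)
  also have "\<dots> = mat_avg (fams_supported_on K G (-1) (insert (n, x) (set xs))) s (opA K dC G dG) a b"
    unfolding locA_eq_mat_avg
  proof (rule mat_mult_mat_avg)
    show "bij_betw (\<lambda>(h, t). fam_add K G (-1) (costar K G (-1) n x h) t) (carrier (G (n + 1)) \<times> ?T)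
        (fams_supported_on K G (-1) (insert (n, x) (set xs)))"
      using fams_supported_on_insert[OF x, of "-1"] by simp
    fix h t assume h: "h \<in> carrier (G (n + 1))" and t: "t \<in> ?T"
    have c: "costar K G (-1) n x h \<in> homsup K G (-1)" using costar_closed[OF x(1)] h by simp
    show "s_comp K G s n x h * s t = s ((\<lambda>(h, t). fam_add K G (-1) (costar K G (-1) n x h) t) (h, t))"
      using homsub_fam_add[OF s c] h t T by (auto simp: s_comp_def)
    show "mat_mult (homsup K G 0) (opA K dC G dG (costar K G (-1) n x h)) (opA K dC G dG t) a b =
        opA K dC G dG ((\<lambda>(h, t). fam_add K G (-1) (costar K G (-1) n x h) t) (h, t)) a b"
      using opA_mult[OF c _ b] t T by auto
  qed
  finally show ?case by (simp add: nx)
qed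

lemma bigA_eq_mat_prod_list:
  assumes "s \<in> homsub K G (-1)" "distinct xs" "set xs = Sigma UNIV K" "a \<in> homsup K G 0" "b \<in> homsup K G 0"
  shows "bigA K dC G dG s a b =
    mat_prod_list (homsup K G 0) (map (\<lambda>(n, x). locA K dC G dG n x (s_comp K G s n x)) xs) a b"
  using mat_prod_list_locA[OF assms(1,5,2) _ assms(4)] assms(3) fams_supported_on_cells[of "set xs"]
  by (simp add: bigA_def mat_avg_def)

lemma bigB_diagonal:
  assumes v: "v \<in> homsup K G 1" and b: "b \<in> homsup K G 0"
  shows "bigB K dC G dG v a b =
    (if a = b \<and> fam_add K G 1 v (cobdry K dC G dG 0 b) = fam_one K G 1 then 1 else 0)"
proof -
  let ?y = "fam_add K G 1 v (cobdry K dC G dG 0 b)"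
  have db: "cobdry K dC G dG 0 b \<in> homsup K G 1" using cobdry_closed[OF b] by simp
  have y: "?y \<in> homsup K G 1" by (rule fam_add_closed[OF v db])
  have "(\<Sum>m\<in>homsub K G 1. m v * m (cobdry K dC G dG 0 b)) = (\<Sum>m\<in>homsub K G 1. m ?y)"
    using homsub_fam_add[OF _ v db] by simp
  also have "\<dots> = (if ?y = fam_one K G 1 then of_nat (card (homsub K G 1)) else 0)"
    using F.sum_gchars[of ?y 1] y by (simp add: gchars_fam_group)
  moreover have "card (homsub K G 1) > 0"
    using F.card_gchars[of 1] F.finite_carrier[of 1] F.one_closed[of 1]
    by (simp add: gchars_fam_group card_gt_0_iff) blast
  ultimately show ?thesis by (cases "a = b") (simp_all add: bigB_def opB_def opQ_def)
qed

lemma locB_diagonal: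
  assumes x: "x \<in> K n" and g: "g \<in> carrier (G (n - 1))" and b: "b \<in> homsup K G 0"
  shows "locB K dC G dG n x g a b =
    (if a = b \<and> g \<otimes>\<^bsub>G (n - 1)\<^esub> cobdry K dC G dG 0 b n x = \<one>\<^bsub>G (n - 1)\<^esub> then 1 else 0)"
proof -
  let ?y = "g \<otimes>\<^bsub>G (n - 1)\<^esub> cobdry K dC G dG 0 b n x"
  have db: "cobdry K dC G dG 0 b \<in> homsup K G 1" using cobdry_closed[OF b] by simp
  have dbx: "cobdry K dC G dG 0 b n x \<in> carrier (G (n - 1))" using homsupD[OF db x] .
  have "(\<Sum>r\<in>gchars (G (n - 1)). r g * pushch K G 1 n x r (cobdry K dC G dG 0 b)) =
      (\<Sum>r\<in>gchars (G (n - 1)). r ?y)"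
    using db g dbx by (intro sum.cong) (auto simp: pushch_def gchars_def)
  also have "\<dots> = (if ?y = \<one>\<^bsub>G (n - 1)\<^esub> then of_nat (card (carrier (G (n - 1)))) else 0)"
    using G.sum_gchars[of ?y] G.card_gchars g dbx by simp
  moreover have "card (carrier (G (n - 1))) > 0"
    using G.finite_carrier[of "n - 1"] G.one_closed[of "n - 1"] card_gt_0_iff by blast
  ultimately show ?thesis by (cases "a = b") (simp_all add: locB_def opB_def opQ_def)
qed

lemma bigB_eq_mat_prod_list:
  assumes v: "v \<in> homsup K G 1" and xs: "set xs = Sigma UNIV K"
    and a: "a \<in> homsup K G 0" and b: "b \<in> homsup K G 0"
  shows "bigB K dC G dG v a b =
    mat_prod_list (homsup K G 0) (map (\<lambda>(n, x). locB K dC G dG n x (v n x)) xs) a b"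
proof -
  have db: "cobdry K dC G dG 0 b \<in> homsup K G 1" using cobdry_closed[OF b] by simp
  let ?Ms = "map (\<lambda>(n, x). locB K dC G dG n x (v n x)) xs"
  have diag: "M a' b' = 0" if "M \<in> set ?Ms" "a' \<in> homsup K G 0" "b' \<in> homsup K G 0" "a' \<noteq> b'" for M a' b'
    using that xs locB_diagonal homsupD[OF v] by auto
  have "mat_prod_list (homsup K G 0) ?Ms a b = (if a = b then \<Prod>M\<leftarrow>?Ms. M b b else 0)"
    by (rule mat_prod_list_diagonal[OF finite_homsup _ a b]) (rule diag)
  also have "\<dots> = (if a = b \<and> (\<forall>(n, x)\<in>Sigma UNIV K.
      v n x \<otimes>\<^bsub>G (n - 1)\<^esub> cobdry K dC G dG 0 b n x = \<one>\<^bsub>G (n - 1)\<^esub>) then 1 else 0)"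
  proof -
    let ?P = "\<lambda>(n, x). v n x \<otimes>\<^bsub>G (n - 1)\<^esub> cobdry K dC G dG 0 b n x = \<one>\<^bsub>G (n - 1)\<^esub>"
    have "(\<Prod>M\<leftarrow>?Ms. M b b) = (\<Prod>nx\<leftarrow>xs. if ?P nx then 1 else 0)"
      unfolding map_map using xs locB_diagonal homsupD[OF v] b
      by (intro arg_cong[where f = prod_list] map_cong) auto
    then show ?thesis using xs by (simp only: prod_list_indicator) auto
  qed
  also have "\<dots> = bigB K dC G dG v a b"
  proof -
    have "fam_add K G 1 v (cobdry K dC G dG 0 b) = fam_one K G 1 \<longleftrightarrow>
        (\<forall>(n, x)\<in>Sigma UNIV K. v n x \<otimes>\<^bsub>G (n - 1)\<^esub> cobdry K dC G dG 0 b n x = \<one>\<^bsub>G (n - 1)\<^esub>)"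
      using homsup_eqI[OF fam_add_closed[OF v db] fam_one_closed]
      by (auto simp: fam_add_def fam_one_def fun_eq_iff)
    then show ?thesis using bigB_diagonal[OF v b] by simp
  qed
  finally show ?thesis ..
qed

end

theorem proposition13:
  fixes K :: "int \<Rightarrow> 'c set" and dC :: "int \<Rightarrow> 'c \<Rightarrow> 'c \<Rightarrow> int"
    and G :: "int \<Rightarrow> 'g monoid" and dG :: "int \<Rightarrow> 'g \<Rightarrow> 'g"
  assumes finK: "\<And>n. finite (K n)"
    and finsupp: "finite {n. K n \<noteq> {}}"
    and dCdC: "\<And>n x z. x \<in> K n \<Longrightarrow> z \<in> K (n - 2) \<Longrightarrow>
                 (\<Sum>y \<in> K (n - 1). dC n x y * dC (n - 1) y z) = 0"
    and grp: "\<And>n. comm_group (G n)"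
    and finG: "\<And>n. finite (carrier (G n))"
    and dGhom: "\<And>n. dG n \<in> hom (G n) (G (n - 1))"
    and dGdG: "\<And>n a. a \<in> carrier (G n) \<Longrightarrow> dG (n - 1) (dG n a) = \<one>\<^bsub>G (n - 2)\<^esub>"
  shows "(\<forall>s \<in> homsub K G (-1). \<forall>xs. distinct xs \<and> set xs = Sigma UNIV K \<longrightarrow>
            (\<forall>a \<in> homsup K G 0. \<forall>b \<in> homsup K G 0.
               bigA K dC G dG s a b =
               mat_prod_list (homsup K G 0)
                 (map (\<lambda>(n, x). locA K dC G dG n x (s_comp K G s n x)) xs) a b))
       \<and> (\<forall>v \<in> homsup K G 1. \<forall>xs. distinct xs \<and> set xs = Sigma UNIV K \<longrightarrow>
            (\<forall>a \<in> homsup K G 0. \<forall>b \<in> homsup K G 0.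
               bigB K dC G dG v a b =
               mat_prod_list (homsup K G 0)
                 (map (\<lambda>(n, x). locB K dC G dG n x (v n x)) xs) a b))"
proof -
  interpret cochain_data K dC G dG
    using finK finsupp grp finG dGhom by (simp add: cochain_data_def)
  show ?thesis by (simp add: bigA_eq_mat_prod_list bigB_eq_mat_prod_list)
qed

end
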